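(* Let $X=([0,2]_{\mathbb{Z}}\times[0,2]_{\mathbb{Z}})\cup([2,4]_{\mathbb{Z}}\times[0,3]_{\mathbb{Z}})\subset\mathbb{Z}^2$. Then $$A'=\{(0,0),(4,0),(4,3),(2,3),(0,2)\}$$ is a minimal freezing set for $(X,c_1)$.
   Context: $[a,b]_{\mathbb{Z}}=\{k\in\mathbb{Z}: a\le k\le b\}$. For $x\neq y$ in $\mathbb{Z}^2$, $x,y$ are $c_1$-adjacent if they differ by 1 in exactly one coordinate and agree in the other. $f:X\to X$ is $c_1$-continuous ($f\in C(X,c_1)$) if whenever $x,x'$ are $c_1$-adjacent, $f(x)$ and $f(x')$ are equal or $c_1$-adjacent. $\mathrm{Fix}(f)=\{x:f(x)=x\}$. $A\subset X$ is a freezing set for $(X,c_1)$ if every $f\in C(X,c_1)$ with $A\subset\mathrm{Fix}(f)$ is the identity on $X$; it is minimal if no proper subset of $A$ is a freezing set. *)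

theory Defs
  imports Main
begin

type_synonym pt = "int \<times> int"

definition c1_adj :: "pt \<Rightarrow> pt \<Rightarrow> bool" where
  "c1_adj x y \<longleftrightarrow> x \<noteq> y \<and>
     ((fst x = fst y \<and> \<bar>snd x - snd y\<bar> = 1) \<or> (snd x = snd y \<and> \<bar>fst x - fst y\<bar> = 1))"

text \<open>Continuous self-maps of (X, c1); only values on X matter.\<close>
definition c1_continuous :: "pt set \<Rightarrow> (pt \<Rightarrow> pt) \<Rightarrow> bool" where
  "c1_continuous X f \<longleftrightarrow> (\<forall>x\<in>X. f x \<in> X) \<and>
     (\<forall>x\<in>X. \<forall>y\<in>X. c1_adj x y \<longrightarrow> (f x = f y \<or> c1_adj (f x) (f y)))"

definition freezing_set :: "pt set \<Rightarrow> pt set \<Rightarrow> bool" where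
  "freezing_set X A \<longleftrightarrow> A \<subseteq> X \<and>
     (\<forall>f. c1_continuous X f \<longrightarrow> (\<forall>a\<in>A. f a = a) \<longrightarrow> (\<forall>x\<in>X. f x = x))"

definition minimal_freezing_set :: "pt set \<Rightarrow> pt set \<Rightarrow> bool" where
  "minimal_freezing_set X A \<longleftrightarrow> freezing_set X A \<and> (\<forall>B. B \<subset> A \<longrightarrow> \<not> freezing_set X B)"

end

theory Submission
  imports Defs
begin

text \<open>Every continuous self-map is taxicab non-expanding towards each of its fixed points from
  which the space is reachable along shortest c1-paths. Fixing the corners (0,0), (4,3), (4,0)
  and (0,2) of the region preserves x + y exactly and then, off the top row, pins down each point;
  the top row (3,3) is pinned by its distance to (4,3) and its neighbour (2,3). For minimality,
  each of the five points can be moved to an adjacent point by a continuous map fixing all others.\<close>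

definition taxicab_dist :: "pt \<Rightarrow> pt \<Rightarrow> int" where
  "taxicab_dist p q = \<bar>fst p - fst q\<bar> + \<bar>snd p - snd q\<bar>"

lemma c1_adj_sym: "c1_adj x y \<Longrightarrow> c1_adj y x"
  unfolding c1_adj_def by auto

lemma taxicab_dist_le_if_adj: "x = y \<or> c1_adj x y \<Longrightarrow> taxicab_dist x c \<le> taxicab_dist y c + 1"
  unfolding c1_adj_def taxicab_dist_def by auto

definition c1_geodesic_to :: "pt set \<Rightarrow> pt \<Rightarrow> bool" where
  "c1_geodesic_to X c \<longleftrightarrow>
     (\<forall>p\<in>X. p \<noteq> c \<longrightarrow> (\<exists>q\<in>X. c1_adj p q \<and> taxicab_dist q c + 1 = taxicab_dist p c))"

lemma c1_continuous_dist_to_fixed_le: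
  assumes cont: "c1_continuous X f" and fixed: "f c = c" and geo: "c1_geodesic_to X c"
    and "p \<in> X"
  shows "taxicab_dist (f p) c \<le> taxicab_dist p c"
  using \<open>p \<in> X\<close>
proof (induction "nat (taxicab_dist p c)" arbitrary: p rule: less_induct)
  case less
  show ?case
  proof (cases "p = c")
    case True
    then show ?thesis using fixed by simp
  next
    case False
    then obtain q where q: "q \<in> X" "c1_adj p q" "taxicab_dist q c + 1 = taxicab_dist p c"
      using geo less.prems unfolding c1_geodesic_to_def by blast
    have "0 \<le> taxicab_dist q c" by (simp add: taxicab_dist_def)
    with q(3) have "taxicab_dist (f q) c \<le> taxicab_dist q c"
      using less.hyps q(1) by simp
    moreover have "f p = f q \<or> c1_adj (f p) (f q)"
      using cont q less.prems unfolding c1_continuous_def by blast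
    then have "taxicab_dist (f p) c \<le> taxicab_dist (f q) c + 1"
      by (rule taxicab_dist_le_if_adj)
    ultimately show ?thesis using q(3) by linarith
  qed
qed

lemma freezing_set_mono:
  "freezing_set X B \<Longrightarrow> B \<subseteq> C \<Longrightarrow> C \<subseteq> X \<Longrightarrow> freezing_set X C"
  unfolding freezing_set_def by blast

lemma minimal_freezing_setI:
  assumes "freezing_set X A" and "\<And>a. a \<in> A \<Longrightarrow> \<not> freezing_set X (A - {a})"
  shows "minimal_freezing_set X A"
  unfolding minimal_freezing_set_def
proof (intro conjI allI impI notI)
  show "freezing_set X A" by fact
next
  fix B assume "B \<subset> A" and "freezing_set X B"
  then obtain a where "a \<in> A" "B \<subseteq> A - {a}" by blast
  moreover have "A \<subseteq> X" using assms(1) unfolding freezing_set_def by blast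
  ultimately show False
    using assms(2) freezing_set_mono[OF \<open>freezing_set X B\<close>] by blast
qed

lemma not_freezing_if_moved:
  assumes "c1_continuous X g" "a \<in> X" "g a \<noteq> a" "\<forall>b\<in>B. g b = b"
  shows "\<not> freezing_set X B"
  using assms unfolding freezing_set_def by blast

lemma c1_continuous_id_upd:
  assumes "b \<in> X" and "\<forall>y\<in>X. c1_adj a y \<longrightarrow> y = b \<or> c1_adj b y"
  shows "c1_continuous X (id(a := b))"
  unfolding c1_continuous_def
proof (intro conjI ballI impI)
  fix x y assume "x \<in> X" "y \<in> X" "c1_adj x y"
  moreover have "x \<noteq> y" using \<open>c1_adj x y\<close> unfolding c1_adj_def by simp
  ultimately show "(id(a := b)) x = (id(a := b)) y \<or> c1_adj ((id(a := b)) x) ((id(a := b)) y)"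
    using assms(2) c1_adj_sym by (metis fun_upd_apply id_apply)
qed (use assms(1) in auto)

abbreviation region :: "pt set" where
  "region \<equiv> ({0..2} \<times> {0..2}) \<union> ({2..4} \<times> {0..3})"

lemma region_eq: "region = {(0,0),(0,1),(0,2),(1,0),(1,1),(1,2),(2,0),(2,1),(2,2),(2,3),
   (3,0),(3,1),(3,2),(3,3),(4,0),(4,1),(4,2),(4,3)}"
proof -
  have "{0..2::int} = {0,1,2}" "{2..4::int} = {2,3,4}" "{0..3::int} = {0,1,2,3}" by auto
  then show ?thesis by auto
qed

lemma region_c1_geodesic_to:
  "c \<in> {(0,0),(4,3),(4,0),(0,2)} \<Longrightarrow> c1_geodesic_to region c"
  unfolding c1_geodesic_to_def region_eq by (auto simp: c1_adj_def taxicab_dist_def)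

lemma region_bounds: "p \<in> region \<Longrightarrow> 0 \<le> fst p \<and> fst p \<le> 4 \<and> 0 \<le> snd p \<and> snd p \<le> 3"
  by auto

lemma region_fixed_below_top_row:
  assumes cont: "c1_continuous region f"
    and fixed: "\<forall>c\<in>{(0,0),(4,3),(4,0),(0,2)}. f c = c"
    and q: "q \<in> region" "snd q \<noteq> 3"
  shows "f q = q"
proof -
  have dist_le: "taxicab_dist (f q) c \<le> taxicab_dist q c" if "c \<in> {(0,0),(4,3),(4,0),(0,2)}" for c
    using c1_continuous_dist_to_fixed_le[OF cont _ region_c1_geodesic_to[OF that] q(1)]
      fixed that by blast
  obtain x y x' y' where xy: "q = (x, y)" and xy': "f q = (x', y')" by fastforce
  have "f q \<in> region" using cont q(1) unfolding c1_continuous_def by blast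
  then have bounds: "0 \<le> x" "x \<le> 4" "0 \<le> y" "y \<le> 2" "0 \<le> x'" "x' \<le> 4" "0 \<le> y'" "y' \<le> 3"
    using region_bounds q xy xy' by force+
  have "x' + y' \<le> x + y" "(4 - x') + (3 - y') \<le> (4 - x) + (3 - y)"
    "(4 - x') + y' \<le> (4 - x) + y" "x' + \<bar>y' - 2\<bar> \<le> x + (2 - y)"
    using dist_le[of "(0,0)"] dist_le[of "(4,3)"] dist_le[of "(4,0)"] dist_le[of "(0,2)"]
      bounds unfolding xy' unfolding xy taxicab_dist_def by simp_all
  then have "x' = x" "y' = y" using bounds by linarith+
  then show ?thesis using xy xy' by simp
qed

lemma region_freezing: "freezing_set region {(0,0), (4,0), (4,3), (2,3), (0,2)}"
  unfolding freezing_set_def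
proof (intro conjI allI impI ballI)
  fix f p
  assume cont: "c1_continuous region f"
    and fixed: "\<forall>a\<in>{(0,0), (4,0), (4,3), (2,3), (0,2)}. f a = a" and p: "p \<in> region"
  have corners: "\<forall>c\<in>{(0,0),(4,3),(4,0),(0,2)}. f c = c" using fixed by auto
  have "f (3,3) = (3,3)"
  proof -
    have "taxicab_dist (f (3,3)) (4,3) \<le> 1"
      using c1_continuous_dist_to_fixed_le[OF cont _ region_c1_geodesic_to, of "(4,3)" "(3,3)"]
        fixed by (auto simp: taxicab_dist_def)
    moreover have "f (3,3) = f (2,3) \<or> c1_adj (f (3,3)) (f (2,3))"
      using cont unfolding c1_continuous_def by (simp add: c1_adj_def)
    ultimately show ?thesis
      using fixed by (cases "f (3,3)") (auto simp: taxicab_dist_def c1_adj_def abs_if split: if_splits)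
  qed
  moreover have "p = (2,3) \<or> p = (3,3) \<or> p = (4,3)" if "snd p = 3" using p that by auto
  ultimately show "f p = p"
    using region_fixed_below_top_row[OF cont corners p] fixed by (cases "snd p = 3") auto
qed auto

lemma region_minus_point_not_freezing:
  assumes "a \<in> {(0,0), (4,0), (4,3), (2,3), (0,2)}"
  shows "\<not> freezing_set region ({(0,0), (4,0), (4,3), (2,3), (0,2)} - {a})"
proof -
  define b :: pt where "b = (if snd a = 3 then (3, 2) else (if fst a = 0 then 1 else 3, 1))"
  have b: "b \<in> region" "b \<noteq> a" "\<forall>y\<in>region. c1_adj a y \<longrightarrow> y = b \<or> c1_adj b y"
    using assms unfolding b_def
    by (elim insertE; simp add: region_eq c1_adj_def)+
  show ?thesis
    by (rule not_freezing_if_moved[OF c1_continuous_id_upd[OF b(1,3)], of a])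
      (use assms b(2) in auto)
qed

theorem mainTheorem3:
  shows "minimal_freezing_set
     (({0..2} \<times> {0..2}) \<union> ({2..4} \<times> {0..3}))
     {(0,0), (4,0), (4,3), (2,3), (0,2)}"
  using region_freezing region_minus_point_not_freezing by (rule minimal_freezing_setI)

end
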